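(* Let $n,m$ be positive integers, $A_1,\dots,A_m\in\mathbb{S}_n$, $\mathcal{A}(X)=(\langle A_i,X\rangle)_{i=1}^m$, $\mathcal{A}^*(y)=\sum_i y_iA_i$, with $\mathcal{A}\mathcal{A}^*$ invertible; let $b\in\mathbb{R}^m$, $C\in\mathbb{S}_n$, $D:=\mathcal{A}^*((\mathcal{A}\mathcal{A}^* )^{-1}b)$, $\mathcal{M}=\{S\in\mathbb{S}_n^+:\operatorname{diag}(S)=\mathbf{1}\}$, and $$L_\sigma(S,y,\widetilde{X})=\langle D,S+C\rangle-\langle\widetilde{X},\mathcal{A}^*(y)-S-C\rangle+\tfrac{\sigma}{2}\|\mathcal{A}^*(y)-S-C\|^2 .$$ Let $y^0\in\mathbb{R}^m$, $\widetilde{X}^0\in\mathbb{S}_n$, let $\sigma_k>0$ for all $k\ge0$, and for $k=0,1,2,\dots$ let $S^{k+1}\in\arg\min_{S\in\mathcal{M}}L_{\sigma_k}(S,y^k,\widetilde{X}^k)$, $y^{k+1}\in\arg\min_{y\in\mathbb{R}^m}L_{\sigma_k}(S^{k+1},y,\widetilde{X}^k)$, and $\widetilde{X}^{k+1}=\widetilde{X}^k-\sigma_k(\mathcal{A}^*(y^{k+1})-S^{k+1}-C)$. Then $\mathcal{A}(\widetilde{X}^{k+1})=0$ for every $k\ge0$. Moreover, for every $k\ge1$, the subproblem $\min_{y\in\mathbb{R}^m}L_{\sigma_k}(S^{k+1},y,\widetilde{X}^k)$ has the closed-form solution $y^{k+1}=(\mathcal{A}\mathcal{A}^* )^{-1}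\mathcal{A}(S^{k+1}+C)$.
   Context: $\mathbb{S}_n$ ($\mathbb{S}_n^+$) denotes real symmetric (positive semidefinite) $n\times n$ matrices, $\langle A,B\rangle=\mathrm{Tr}(A^{\intercal}B)$, $\|\cdot\|$ the Frobenius norm, $\operatorname{diag}(S)$ the vector of diagonal entries, $\mathbf{1}$ the all-ones vector. *)

theory Defs
  imports "HOL-Analysis.Analysis"
begin

definition symm :: "real^'n^'n \<Rightarrow> bool" where
  "symm X \<longleftrightarrow> transpose X = X"

definition psd :: "real^'n^'n \<Rightarrow> bool" where
  "psd X \<longleftrightarrow> symm X \<and> (\<forall>x. x \<bullet> (X *v x) \<ge> 0)"

definition minner :: "real^'n^'n \<Rightarrow> real^'n^'n \<Rightarrow> real" where
  "minner A B = (\<Sum>i\<in>UNIV. (transpose A ** B) $ i $ i)"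

definition fnorm :: "real^'n^'n \<Rightarrow> real" where
  "fnorm A = sqrt (minner A A)"

definition Aop :: "('m::finite \<Rightarrow> real^'n^'n) \<Rightarrow> real^'n^'n \<Rightarrow> real^'m" where
  "Aop As X = (\<chi> i. minner (As i) X)"

definition Aadj :: "('m::finite \<Rightarrow> real^'n^'n) \<Rightarrow> real^'m \<Rightarrow> real^'n^'n" where
  "Aadj As y = (\<Sum>i\<in>UNIV. (y $ i) *\<^sub>R As i)"

definition AAadj :: "('m::finite \<Rightarrow> real^'n^'n) \<Rightarrow> real^'m^'m" where
  "AAadj As = (\<chi> i j. minner (As i) (As j))"

definition elliptope :: "(real^'n^'n) set" where
  "elliptope = {S. psd S \<and> (\<forall>i. S $ i $ i = 1)}"

definition Lsig :: "('m::finite \<Rightarrow> real^'n^'n) \<Rightarrow> real^'m \<Rightarrow> real^'n^'n \<Rightarrow> real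
    \<Rightarrow> real^'n^'n \<Rightarrow> real^'m \<Rightarrow> real^'n^'n \<Rightarrow> real" where
  "Lsig As b C \<sigma> S y X =
     (let D = Aadj As (matrix_inv (AAadj As) *v b) in
      minner D (S + C) - minner X (Aadj As y - S - C)
      + \<sigma> / 2 * (fnorm (Aadj As y - S - C))\<^sup>2)"

end

theory Submission
  imports Defs
begin

text \<open>
  The \<open>y\<close>-subproblem is an unconstrained convex quadratic, so its minimiser is stationary:
  \<open>\<A>(X\<^sup>k) = \<sigma>\<^sub>k \<A>(\<A>\<^sup>*(y\<^sup>k\<^sup>+\<^sup>1) - S\<^sup>k\<^sup>+\<^sup>1 - C)\<close>.  Applying the linear map \<open>\<A>\<close> to
  the multiplier update, the right-hand side cancels \<open>\<A>(X\<^sup>k)\<close>, whence \<open>\<A>(X\<^sup>k\<^sup>+\<^sup>1) = 0\<close>.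
  Once \<open>\<A>(X\<^sup>k) = 0\<close> (i.e. from the second iteration on), stationarity becomes the normal
  equation \<open>\<A>\<A>\<^sup>* y\<^sup>k\<^sup>+\<^sup>1 = \<A>(S\<^sup>k\<^sup>+\<^sup>1 + C)\<close>, which the invertibility of \<open>\<A>\<A>\<^sup>*\<close> solves.
\<close>

lemma minner_eq_inner: "minner A B = A \<bullet> B"
proof -
  have "minner A B = (\<Sum>i\<in>UNIV. \<Sum>k\<in>UNIV. A$k$i * B$k$i)"
    unfolding minner_def matrix_matrix_mult_def transpose_def by simp
  also have "\<dots> = (\<Sum>k\<in>UNIV. \<Sum>i\<in>UNIV. A$k$i * B$k$i)"
    by (rule sum.swap)
  also have "\<dots> = A \<bullet> B"
    unfolding inner_vec_def by simp
  finally show ?thesis .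
qed

lemma fnorm_power2: "(fnorm A)\<^sup>2 = A \<bullet> A"
  unfolding fnorm_def minner_eq_inner by simp

lemma linear_Aop: "linear (Aop As)"
  by (rule linearI) (simp_all add: Aop_def minner_eq_inner vec_eq_iff inner_add_right)

lemma Aadj_add: "Aadj As (y + z) = Aadj As y + Aadj As z"
  unfolding Aadj_def by (simp add: scaleR_add_left sum.distrib)

lemma Aadj_axis: "Aadj As (axis i t) = t *\<^sub>R As i"
proof -
  have "Aadj As (axis i t) = (\<Sum>j\<in>UNIV. if j = i then t *\<^sub>R As i else 0)"
    unfolding Aadj_def by (intro sum.cong) (auto simp: axis_def)
  then show ?thesis by simp
qed

lemma Aop_Aadj: "Aop As (Aadj As v) = AAadj As *v v"
  unfolding Aop_def Aadj_def AAadj_def matrix_vector_mult_def minner_eq_inner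
  by (simp add: inner_sum_right mult.commute)

lemma matrix_inv_mult_vector_eq:
  fixes M :: "'a::field^'n^'n"
  assumes "invertible M" and "M *v x = r"
  shows "x = matrix_inv M *v r"
proof -
  have "matrix_inv M ** M = mat 1"
    using assms(1) unfolding invertible_def matrix_inv_def by (rule someI_ex[THEN conjunct2])
  then show ?thesis
    using assms(2) by (metis matrix_vector_mul_assoc matrix_vector_mul_lid)
qed

lemma Lsig_along_axis:
  fixes As :: "'m::finite \<Rightarrow> real^'n^'n" and y :: "real^'m" and S C :: "real^'n^'n"
  defines "P \<equiv> Aadj As y - S - C"
  shows "Lsig As b C s S (y + axis i t) X = Lsig As b C s S y X
           + t * (s * (As i \<bullet> P) - As i \<bullet> X) + t\<^sup>2 * (s / 2 * (As i \<bullet> As i))"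
proof -
  have "Aadj As (y + axis i t) - S - C = P + t *\<^sub>R As i"
    unfolding P_def by (simp add: Aadj_add Aadj_axis algebra_simps)
  then show ?thesis
    unfolding Lsig_def Let_def minner_eq_inner fnorm_power2 P_def[symmetric]
    by (simp add: inner_add_left inner_add_right inner_commute algebra_simps power2_eq_square)
qed

lemma Lsig_argmin_y_stationary:
  fixes As :: "'m::finite \<Rightarrow> real^'n^'n"
  assumes "\<forall>z. Lsig As b C s S y X \<le> Lsig As b C s S z X"
  shows "Aop As X = s *\<^sub>R Aop As (Aadj As y - S - C)"
proof -
  have "As i \<bullet> X = s * (As i \<bullet> (Aadj As y - S - C))" for i
  proof -
    define a where "a = s * (As i \<bullet> (Aadj As y - S - C)) - As i \<bullet> X"
    define c where "c = s / 2 * (As i \<bullet> As i)"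
    let ?f = "\<lambda>t. t * a + t\<^sup>2 * c"
    have "?f 0 \<le> ?f t" for t
      using assms[rule_format, of "y + axis i t"] unfolding Lsig_along_axis a_def c_def by simp
    then have local_min: "\<forall>t. \<bar>0 - t\<bar> < 1 \<longrightarrow> ?f 0 \<le> ?f t"
      by blast
    have "DERIV ?f 0 :> a"
      by (auto intro!: derivative_eq_intros)
    then have "a = 0"
      using zero_less_one local_min by (rule DERIV_local_min)
    then show ?thesis
      unfolding a_def by simp
  qed
  then show ?thesis
    by (simp add: Aop_def minner_eq_inner vec_eq_iff)
qed

theorem lemma3p1:
  fixes As :: "'m::finite \<Rightarrow> real^'n^'n"
    and b :: "real^'m" and C :: "real^'n^'n"
    and \<sigma> :: "nat \<Rightarrow> real"
    and S :: "nat \<Rightarrow> real^'n^'n" and y :: "nat \<Rightarrow> real^'m" and X :: "nat \<Rightarrow> real^'n^'n"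
  assumes symA: "\<And>i. symm (As i)"
    and inv: "invertible (AAadj As)"
    and symC: "symm C"
    and symX0: "symm (X 0)"
    and sig_pos: "\<And>k. \<sigma> k > 0"
    and S_min: "\<And>k. S (Suc k) \<in> elliptope \<and>
                  (\<forall>T\<in>elliptope. Lsig As b C (\<sigma> k) (S (Suc k)) (y k) (X k)
                                   \<le> Lsig As b C (\<sigma> k) T (y k) (X k))"
    and y_min: "\<And>k. \<forall>z. Lsig As b C (\<sigma> k) (S (Suc k)) (y (Suc k)) (X k)
                          \<le> Lsig As b C (\<sigma> k) (S (Suc k)) z (X k)"
    and X_upd: "\<And>k. X (Suc k) = X k - \<sigma> k *\<^sub>R (Aadj As (y (Suc k)) - S (Suc k) - C)"
  shows "(\<forall>k. Aop As (X (Suc k)) = 0) \<and>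
         (\<forall>k\<ge>1. y (Suc k) = matrix_inv (AAadj As) *v Aop As (S (Suc k) + C))"
proof -
  have stationary: "Aop As (X k) = \<sigma> k *\<^sub>R Aop As (Aadj As (y (Suc k)) - S (Suc k) - C)" for k
    using Lsig_argmin_y_stationary[OF y_min] .
  have dual_feasible: "Aop As (X (Suc k)) = 0" for k
    unfolding X_upd linear_diff[OF linear_Aop] linear_scale[OF linear_Aop] stationary by simp
  have "y (Suc k) = matrix_inv (AAadj As) *v Aop As (S (Suc k) + C)" if "k \<ge> 1" for k
  proof (rule matrix_inv_mult_vector_eq[OF inv])
    have "Aop As (Aadj As (y (Suc k)) - S (Suc k) - C) = 0"
      using stationary[of k] dual_feasible[of "k - 1"] sig_pos[of k] \<open>k \<ge> 1\<close> by simp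
    then show "AAadj As *v y (Suc k) = Aop As (S (Suc k) + C)"
      by (simp add: Aop_Aadj linear_diff[OF linear_Aop] linear_add[OF linear_Aop] diff_eq_eq)
  qed
  with dual_feasible show ?thesis by blast
qed

end
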